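(* Let $R$ be a finite local Frobenius ring which is not a field and has odd characteristic, with a fixed primitive additive character $\psi$, and let $\tau$ be a non-primitive multiplicative character of $R$. Then $$\sum_{a\in R^\times}|K_\tau(a)|^4=3\,|R^\times|\,|R|^2.$$
   Context: All rings are finite and commutative with identity; $R^\times$ is the unit group; $M$ is the maximal ideal. An additive character $(R,+)\to\mathbb{C}^*$ is primitive if the only ideal on which it is identically $1$ is $(0)$; $R$ is Frobenius if such a character exists. A multiplicative character is a homomorphism $R^\times\to\mathbb{C}^*$; its conductor is $R$ if it is trivial, and otherwise the largest ideal $I\subseteq M$ such that it is identically $1$ on $1+I$; it is primitive if its conductor is $(0)$. $K_\tau(a)=\sum_{u\in R^\times}\tau(u)\psi(u+au^{-1})$. Odd characteristic means $R/M$ has odd characteristic. *)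

theory Defs
  imports "HOL-Analysis.Analysis"
begin

definition units_of_ring :: "'a::comm_ring_1 set" where
  "units_of_ring = {u. \<exists>v. u * v = 1}"

definition ring_inv :: "'a::comm_ring_1 \<Rightarrow> 'a" where
  "ring_inv u = (THE v. u * v = 1)"

definition is_ideal :: "'a::comm_ring_1 set \<Rightarrow> bool" where
  "is_ideal I \<longleftrightarrow> 0 \<in> I \<and> (\<forall>x\<in>I. \<forall>y\<in>I. x + y \<in> I) \<and> (\<forall>r. \<forall>x\<in>I. r * x \<in> I)"

text \<open>A finite commutative ring is local iff its non-units form an ideal; this ideal is then
  the unique maximal ideal M.\<close>
definition max_ideal :: "'a::comm_ring_1 set" where
  "max_ideal = - units_of_ring"

definition local_ring :: "'a::{comm_ring_1,finite} itself \<Rightarrow> bool" where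
  "local_ring _ \<longleftrightarrow> (0::'a) \<noteq> 1 \<and> is_ideal (max_ideal :: 'a set)"

definition is_field_ring :: "'a::comm_ring_1 itself \<Rightarrow> bool" where
  "is_field_ring _ \<longleftrightarrow> (0::'a) \<noteq> 1 \<and> (\<forall>x::'a. x \<noteq> 0 \<longrightarrow> x \<in> units_of_ring)"

text \<open>Characteristic of the residue field R/M: least positive n with n\<cdot>1 in M.\<close>
definition residue_char :: "'a::comm_ring_1 itself \<Rightarrow> nat" where
  "residue_char _ = (LEAST n. n > 0 \<and> (of_nat n :: 'a) \<in> max_ideal)"

definition additive_character :: "('a::comm_ring_1 \<Rightarrow> complex) \<Rightarrow> bool" where
  "additive_character \<psi> \<longleftrightarrow> (\<forall>x y. \<psi> (x + y) = \<psi> x * \<psi> y) \<and> (\<forall>x. \<psi> x \<noteq> 0)"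

definition primitive_additive_character :: "('a::comm_ring_1 \<Rightarrow> complex) \<Rightarrow> bool" where
  "primitive_additive_character \<psi> \<longleftrightarrow> additive_character \<psi> \<and>
     (\<forall>I. is_ideal I \<and> (\<forall>x\<in>I. \<psi> x = 1) \<longrightarrow> I = {0})"

text \<open>Multiplicative character: homomorphism on the unit group (values off units irrelevant).\<close>
definition mult_character :: "('a::comm_ring_1 \<Rightarrow> complex) \<Rightarrow> bool" where
  "mult_character \<tau> \<longleftrightarrow>
     (\<forall>u\<in>units_of_ring. \<forall>v\<in>units_of_ring. \<tau> (u * v) = \<tau> u * \<tau> v) \<and>
     (\<forall>u\<in>units_of_ring. \<tau> u \<noteq> 0)"

definition trivial_mult_character :: "('a::comm_ring_1 \<Rightarrow> complex) \<Rightarrow> bool" where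
  "trivial_mult_character \<tau> \<longleftrightarrow> (\<forall>u\<in>units_of_ring. \<tau> u = 1)"

definition conductor :: "('a::comm_ring_1 \<Rightarrow> complex) \<Rightarrow> 'a set" where
  "conductor \<tau> = (if trivial_mult_character \<tau> then UNIV else
     (THE I. is_ideal I \<and> I \<subseteq> max_ideal \<and> (\<forall>x\<in>I. \<tau> (1 + x) = 1) \<and>
        (\<forall>J. is_ideal J \<and> J \<subseteq> max_ideal \<and> (\<forall>x\<in>J. \<tau> (1 + x) = 1) \<longrightarrow> J \<subseteq> I)))"

definition primitive_mult_character :: "('a::comm_ring_1 \<Rightarrow> complex) \<Rightarrow> bool" where
  "primitive_mult_character \<tau> \<longleftrightarrow> conductor \<tau> = {0}"

definition kloosterman :: "('a::{comm_ring_1,finite} \<Rightarrow> complex) \<Rightarrow> ('a \<Rightarrow> complex) \<Rightarrow> 'a \<Rightarrow> complex" where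
  "kloosterman \<psi> \<tau> a = (\<Sum>u\<in>units_of_ring. \<tau> u * \<psi> (u + a * ring_inv u))"

end

theory Submission
  imports Defs
begin

text \<open>
  Let S be the socle (the annihilator of M); a primitive additive character makes S non-zero and
  contained in every non-zero ideal, so a non-primitive \<tau> is trivial on 1 + S. Substituting
  u \<mapsto> u(1 + t) with t \<in> S and averaging over t reduces K(a) to the units u with u^2 \<equiv> a (mod M).
  In odd characteristic these form two residue classes u0 + M and -u0 + M, and K(a) splits into two
  partial sums, each of absolute value square root of |R|. Shifting a by j \<in> S multiplies these partial
  sums by \<psi>(j/u0) and \<psi>(-j/u0); averaging |K(a + j)|^4 over j \<in> S leaves 6|R|^2 for each of the
  |R^\<times>|/2 units a that are squares mod M, and 0 otherwise.
\<close>

lemma units_of_ringI: "u * v = 1 \<Longrightarrow> u \<in> units_of_ring"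
  unfolding units_of_ring_def by blast

lemma mult_ring_inv: "u \<in> units_of_ring \<Longrightarrow> u * ring_inv u = (1::'a::comm_ring_1)"
proof -
  assume "u \<in> units_of_ring"
  then obtain v where v: "u * v = 1" unfolding units_of_ring_def by blast
  have "ring_inv u = v" unfolding ring_inv_def
  proof (rule the_equality)
    fix w assume "u * w = 1"
    then show "w = v" using v by (metis mult.assoc mult.commute mult_1_left mult_1_right)
  qed (rule v)
  then show ?thesis using v by simp
qed

lemma ring_inv_unique: "u * v = (1::'a::comm_ring_1) \<Longrightarrow> ring_inv u = v"
  by (metis mult.left_commute mult_1_right mult_ring_inv units_of_ringI)

lemma ring_inv_in_units: "u \<in> units_of_ring \<Longrightarrow> ring_inv u \<in> (units_of_ring::'a::comm_ring_1 set)"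
  by (metis mult.commute mult_ring_inv units_of_ringI)

lemma mult_in_units_iff:
  "u * v \<in> (units_of_ring::'a::comm_ring_1 set) \<longleftrightarrow> u \<in> units_of_ring \<and> v \<in> units_of_ring"
proof
  assume "u * v \<in> units_of_ring"
  then obtain w where "u * v * w = 1" unfolding units_of_ring_def by blast
  then have "u * (v * w) = 1" "v * (u * w) = 1" by (simp_all add: ac_simps)
  then show "u \<in> units_of_ring \<and> v \<in> units_of_ring" using units_of_ringI by blast
next
  assume "u \<in> units_of_ring \<and> v \<in> units_of_ring"
  then have u: "u * ring_inv u = 1" and v: "v * ring_inv v = 1" by (simp_all add: mult_ring_inv)
  have "(u * v) * (ring_inv u * ring_inv v) = (u * ring_inv u) * (v * ring_inv v)"
    by (simp add: ac_simps)
  also have "\<dots> = 1" by (simp add: u v)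
  finally show "u * v \<in> units_of_ring" by (rule units_of_ringI)
qed

lemma one_in_units [simp]: "1 \<in> (units_of_ring::'a::comm_ring_1 set)"
  by (rule units_of_ringI[of 1 1]) simp

lemma uminus_in_units: "u \<in> units_of_ring \<Longrightarrow> - u \<in> (units_of_ring::'a::comm_ring_1 set)"
  by (metis minus_mult_minus mult_ring_inv units_of_ringI)

lemma power_in_units: "u \<in> units_of_ring \<Longrightarrow> u ^ n \<in> (units_of_ring::'a::comm_ring_1 set)"
  by (induction n) (simp_all add: mult_in_units_iff)

lemma ring_inv_mult:
  assumes "u \<in> units_of_ring" "v \<in> units_of_ring"
  shows "ring_inv (u * v) = ring_inv u * (ring_inv v :: 'a::comm_ring_1)"
proof (rule ring_inv_unique)
  have "(u * v) * (ring_inv u * ring_inv v) = (u * ring_inv u) * (v * ring_inv v)"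
    by (simp add: ac_simps)
  then show "(u * v) * (ring_inv u * ring_inv v) = 1"
    using mult_ring_inv[OF assms(1)] mult_ring_inv[OF assms(2)] by simp
qed

lemma ring_inv_uminus: "u \<in> units_of_ring \<Longrightarrow> ring_inv (- u) = - (ring_inv u :: 'a::comm_ring_1)"
  by (metis minus_mult_minus mult_ring_inv ring_inv_unique)

lemma ring_inv_1 [simp]: "ring_inv 1 = (1::'a::comm_ring_1)"
  by (rule ring_inv_unique) simp

lemma unit_mult_eq_0_iff:
  "u \<in> units_of_ring \<Longrightarrow> u * x = 0 \<longleftrightarrow> x = (0::'a::comm_ring_1)"
  by (metis mult.assoc mult.commute mult_1_left mult_zero_right mult_ring_inv)

lemma bij_betw_mult_unit:
  assumes v: "v \<in> units_of_ring"
  shows "bij_betw (\<lambda>u. u * v) units_of_ring (units_of_ring::'a::comm_ring_1 set)"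
proof (rule bij_betw_byWitness[where f' = "\<lambda>u. u * ring_inv v"])
  show "\<forall>u\<in>units_of_ring. u * v * ring_inv v = u" "\<forall>u\<in>units_of_ring. u * ring_inv v * v = u"
    using mult_ring_inv[OF v] by (simp_all add: mult.assoc mult.commute[of "ring_inv v" v])
qed (use v ring_inv_in_units in \<open>auto simp: mult_in_units_iff\<close>)

lemma ideal_uminus: "is_ideal I \<Longrightarrow> x \<in> I \<Longrightarrow> - x \<in> I"
  unfolding is_ideal_def by (metis mult_minus1)

lemma is_ideal_UNIV: "is_ideal UNIV"
  unfolding is_ideal_def by simp

lemma is_ideal_image_mult:
  assumes I: "is_ideal I"
  shows "is_ideal ((*) c ` I)"
  unfolding is_ideal_def
proof (intro conjI ballI allI)
  show "0 \<in> (*) c ` I" using I unfolding is_ideal_def by (metis imageI mult_zero_right)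
  fix x y assume "x \<in> (*) c ` I" "y \<in> (*) c ` I"
  then obtain x' y' where "x' \<in> I" "y' \<in> I" "x = c * x'" "y = c * y'" by blast
  then show "x + y \<in> (*) c ` I" using I unfolding is_ideal_def by (metis distrib_left imageI)
next
  fix r x assume "x \<in> (*) c ` I"
  then obtain x' where "x' \<in> I" "x = c * x'" by blast
  then show "r * x \<in> (*) c ` I" using I unfolding is_ideal_def by (metis imageI mult.left_commute)
qed

definition annihilator :: "'a::comm_ring_1 set \<Rightarrow> 'a set" where
  "annihilator I = {c. \<forall>t\<in>I. c * t = 0}"

lemma is_ideal_annihilator: "is_ideal (annihilator I)"
  unfolding is_ideal_def annihilator_def by (auto simp: distrib_right mult.assoc)

definition principal_ideal :: "'a::comm_ring_1 \<Rightarrow> 'a set" where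
  "principal_ideal y = range (\<lambda>r. r * y)"

lemma is_ideal_principal_ideal: "is_ideal (principal_ideal y)"
  unfolding is_ideal_def principal_ideal_def
  by (auto simp: distrib_right mult.assoc)
     (metis mult_zero_left rangeI, metis distrib_right rangeI, metis mult.assoc rangeI)

lemma principal_ideal_subset: "is_ideal I \<Longrightarrow> y \<in> I \<Longrightarrow> principal_ideal y \<subseteq> I"
  unfolding principal_ideal_def is_ideal_def by blast

lemma mem_principal_ideal_self: "y \<in> principal_ideal y"
  unfolding principal_ideal_def by (metis mult_1_left rangeI)

lemma finite_nat_collision: "\<exists>n m::nat. n < m \<and> f n = (f m :: 'a::finite)"
proof -
  have "\<not> inj f"
    using finite_imageD[of f "UNIV :: nat set"] by auto
  then obtain n m where "n \<noteq> m" "f n = f m" unfolding inj_def by blast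
  then show ?thesis by (metis linorder_neqE_nat)
qed

context
  fixes \<psi> :: "'a::{comm_ring_1,finite} \<Rightarrow> complex"
  assumes \<psi>: "additive_character \<psi>"
begin

lemma additive_character_add: "\<psi> (x + y) = \<psi> x * \<psi> y"
  using \<psi> unfolding additive_character_def by blast

lemma additive_character_0 [simp]: "\<psi> 0 = 1"
  using additive_character_add[of 0 0] \<psi> unfolding additive_character_def by simp

lemma additive_character_of_nat_mult: "\<psi> (of_nat n * x) = \<psi> x ^ n"
  by (induction n) (simp_all add: distrib_right additive_character_add)

lemma norm_additive_character [simp]: "norm (\<psi> x) = 1"
proof -
  obtain n m :: nat where nm: "n < m" "of_nat n * x = of_nat m * x"
    using finite_nat_collision[of "\<lambda>n. of_nat n * x"] by blast
  then have "\<psi> x ^ n = \<psi> x ^ n * \<psi> x ^ (m - n)"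
    by (metis additive_character_of_nat_mult le_add_diff_inverse less_imp_le power_add)
  then have "\<psi> x ^ (m - n) = 1" using \<psi> unfolding additive_character_def by simp
  then show ?thesis using power_eq_1_iff nm(1) by fastforce
qed

lemma cnj_additive_character: "cnj (\<psi> x) = \<psi> (- x)"
proof -
  have "\<psi> x * cnj (\<psi> x) = \<psi> x * \<psi> (- x)"
    using complex_norm_square[of "\<psi> x"] additive_character_add[of x "- x"] by simp
  then show ?thesis using \<psi> unfolding additive_character_def by simp
qed

end

lemma sum_character_eq_0:
  fixes ch :: "'a::ab_group_add \<Rightarrow> complex"
  assumes hom: "\<And>x y. ch (x + y) = ch x * ch y"
    and add: "\<And>x y. x \<in> A \<Longrightarrow> y \<in> A \<Longrightarrow> x + y \<in> A"
    and neg: "\<And>x. x \<in> A \<Longrightarrow> - x \<in> A"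
    and a: "a \<in> A" "ch a \<noteq> 1"
  shows "sum ch A = 0"
proof -
  have "bij_betw (\<lambda>x. a + x) A A"
    by (rule bij_betw_byWitness[where f' = "\<lambda>x. - a + x"]) (use add[OF _ neg[OF a(1)]] add[OF a(1)] in auto)
  then have "sum ch A = sum (\<lambda>x. ch (a + x)) A"
    using sum.reindex_bij_betw by metis
  also have "\<dots> = ch a * sum ch A" by (simp add: hom sum_distrib_left)
  finally have "(1 - ch a) * sum ch A = 0" by (simp add: algebra_simps)
  then show ?thesis using a(2) by simp
qed

context
  fixes \<psi> :: "'a::{comm_ring_1,finite} \<Rightarrow> complex"
  assumes \<psi>: "primitive_additive_character \<psi>"
begin

lemma primitive_additive_character_additive: "additive_character \<psi>"
  using \<psi> unfolding primitive_additive_character_def by blast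

text \<open>For c outside the annihilator of I, primitivity makes t \<mapsto> \<psi>(ct) non-trivial on I,
  since \<psi> cannot be trivial on the non-zero ideal cI.\<close>
lemma sum_primitive_character_ideal:
  assumes I: "is_ideal I"
  shows "(\<Sum>t\<in>I. \<psi> (c * t)) = (if c \<in> annihilator I then of_nat (card I) else 0)"
proof (cases "c \<in> annihilator I")
  case False
  have "is_ideal ((*) c ` I)" using is_ideal_image_mult[OF I] .
  moreover have "(*) c ` I \<noteq> {0}" using False unfolding annihilator_def by auto
  ultimately obtain t where t: "t \<in> I" "\<psi> (c * t) \<noteq> 1"
    using \<psi> unfolding primitive_additive_character_def by blast
  have "(\<Sum>t\<in>I. \<psi> (c * t)) = 0"
    by (rule sum_character_eq_0[of "\<lambda>t. \<psi> (c * t)" I t])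
       (use I t in \<open>auto simp: distrib_left additive_character_add[OF primitive_additive_character_additive]
         ideal_uminus is_ideal_def\<close>)
  then show ?thesis using False by simp
qed (simp add: annihilator_def additive_character_0[OF primitive_additive_character_additive])

text \<open>Both sides are the double character sum of \<psi>(ct) over R \<times> I, summed in either order.\<close>
lemma card_ideal_mult_card_annihilator:
  fixes I :: "'a set"
  assumes I: "is_ideal I"
  shows "card I * card (annihilator I) = CARD('a)"
proof -
  have ann_UNIV: "t \<in> annihilator UNIV \<longleftrightarrow> t = 0" for t :: 'a
    unfolding annihilator_def by (auto dest: spec[of _ 1])
  have "(\<Sum>c\<in>UNIV. \<Sum>t\<in>I. \<psi> (c * t)) = (\<Sum>c\<in>UNIV. if c \<in> annihilator I then of_nat (card I) else 0)"
    using sum_primitive_character_ideal[OF I] by simp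
  also have "\<dots> = of_nat (card (annihilator I) * card I)"
    by (simp add: sum.If_cases)
  finally have by_c: "(\<Sum>c\<in>UNIV. \<Sum>t\<in>I. \<psi> (c * t)) = of_nat (card (annihilator I) * card I)" .
  have "(\<Sum>c\<in>UNIV. \<Sum>t\<in>I. \<psi> (c * t)) = (\<Sum>t\<in>I. \<Sum>c\<in>UNIV. \<psi> (t * c))"
    by (subst sum.swap) (simp add: mult.commute)
  also have "\<dots> = (\<Sum>t\<in>I. if t = 0 then of_nat CARD('a) else 0)"
    using sum_primitive_character_ideal[OF is_ideal_UNIV] ann_UNIV by simp
  also have "\<dots> = of_nat CARD('a)"
    using I unfolding is_ideal_def by (simp add: sum.delta)
  finally have "of_nat (card (annihilator I) * card I) = (of_nat CARD('a) :: complex)"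
    using by_c by simp
  then show ?thesis by (simp only: of_nat_eq_iff mult.commute)
qed

end

context
  fixes \<tau> :: "'a::{comm_ring_1,finite} \<Rightarrow> complex"
  assumes \<tau>: "mult_character \<tau>"
begin

lemma mult_character_mult:
  "u \<in> units_of_ring \<Longrightarrow> v \<in> units_of_ring \<Longrightarrow> \<tau> (u * v) = \<tau> u * \<tau> v"
  using \<tau> unfolding mult_character_def by blast

lemma mult_character_1 [simp]: "\<tau> 1 = 1"
  using mult_character_mult[of 1 1] \<tau> unfolding mult_character_def by simp

lemma mult_character_power: "u \<in> units_of_ring \<Longrightarrow> \<tau> (u ^ n) = \<tau> u ^ n"
  by (induction n) (simp_all add: mult_character_mult power_in_units)

lemma norm_mult_character: "u \<in> units_of_ring \<Longrightarrow> norm (\<tau> u) = 1"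
proof -
  assume u: "u \<in> units_of_ring"
  obtain n m :: nat where nm: "n < m" "u ^ n = u ^ m"
    using finite_nat_collision[of "\<lambda>n. u ^ n"] by blast
  then have "u ^ n * 1 = u ^ n * u ^ (m - n)"
    by (metis le_add_diff_inverse less_imp_le mult_1_right power_add)
  then have "u ^ n * (u ^ (m - n) - 1) = 0" by (simp add: algebra_simps)
  then have "u ^ (m - n) = 1" using unit_mult_eq_0_iff[OF power_in_units[OF u]] by simp
  then have "\<tau> u ^ (m - n) = 1" by (metis mult_character_1 mult_character_power[OF u])
  then show ?thesis using power_eq_1_iff nm(1) by fastforce
qed

lemma mult_character_mult_cnj: "u \<in> units_of_ring \<Longrightarrow> \<tau> u * cnj (\<tau> u) = 1"
  using complex_norm_square[of "\<tau> u"] norm_mult_character by simp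

end

lemma mem_max_ideal_iff: "x \<in> max_ideal \<longleftrightarrow> x \<notin> units_of_ring"
  unfolding max_ideal_def by simp

definition residue_class :: "'a::comm_ring_1 \<Rightarrow> 'a set" where
  "residue_class w = {u. u - w \<in> max_ideal}"

definition square_roots :: "'a::comm_ring_1 \<Rightarrow> 'a set" where
  "square_roots a = {u \<in> units_of_ring. u * u - a \<in> max_ideal}"

locale finite_local_ring =
  assumes local_ring: "local_ring TYPE('a::{comm_ring_1,finite})"
begin

abbreviation U where "U \<equiv> (units_of_ring :: 'a set)"
abbreviation M where "M \<equiv> (max_ideal :: 'a set)"

lemma is_ideal_max_ideal: "is_ideal M"
  using local_ring unfolding local_ring_def by simp

lemma zero_in_max_ideal [simp]: "0 \<in> M"
  using is_ideal_max_ideal unfolding is_ideal_def by simp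

lemma add_in_max_ideal: "x \<in> M \<Longrightarrow> y \<in> M \<Longrightarrow> x + y \<in> M"
  using is_ideal_max_ideal unfolding is_ideal_def by simp

lemma mult_in_max_ideal: "x \<in> M \<Longrightarrow> r * x \<in> M"
  using is_ideal_max_ideal unfolding is_ideal_def by simp

lemma uminus_in_max_ideal: "x \<in> M \<Longrightarrow> - x \<in> M"
  using ideal_uminus[OF is_ideal_max_ideal] .

lemma diff_in_max_ideal: "x \<in> M \<Longrightarrow> y \<in> M \<Longrightarrow> x - y \<in> M"
  by (metis add_in_max_ideal uminus_in_max_ideal diff_conv_add_uminus)

lemma mult_in_max_ideal_iff: "x * y \<in> M \<longleftrightarrow> x \<in> M \<or> y \<in> M"
  by (simp add: mem_max_ideal_iff mult_in_units_iff)

lemma unit_add_max_ideal: "u \<in> U \<Longrightarrow> m \<in> M \<Longrightarrow> u + m \<in> U"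
  using diff_in_max_ideal[of "u + m" m] by (auto simp: mem_max_ideal_iff)

lemma card_max_ideal_less: "card M < CARD('a)"
  using one_in_units by (metis mem_max_ideal_iff UNIV_I card_seteq finite linorder_not_le subsetI)

lemma two_in_units:
  assumes "odd (residue_char TYPE('a))"
  shows "(2::'a) \<in> U"
proof (rule ccontr)
  assume "(2::'a) \<notin> U"
  then have two: "(of_nat 2 :: 'a) \<in> M" by (simp add: mem_max_ideal_iff)
  define L where "L = (LEAST n. n > 0 \<and> (of_nat n :: 'a) \<in> M)"
  have "L \<le> 2" unfolding L_def by (rule Least_le) (use two in simp)
  moreover have "L > 0 \<and> (of_nat L :: 'a) \<in> M" unfolding L_def by (rule LeastI[of _ 2]) (use two in simp)
  ultimately have "L = 2" by (cases L; cases "L - 1") (auto simp: mem_max_ideal_iff)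
  then show False using assms unfolding residue_char_def L_def[symmetric] by simp
qed

lemma bij_betw_add_residue_class: "bij_betw (\<lambda>m. w + m) M (residue_class w)"
  by (rule bij_betw_byWitness[where f' = "\<lambda>u. u - w"]) (auto simp: residue_class_def)

lemma card_residue_class: "card (residue_class (w::'a)) = card M"
  using bij_betw_same_card[OF bij_betw_add_residue_class[of w]] by simp

lemma sum_residue_class: "(\<Sum>y\<in>residue_class w. f y) = (\<Sum>m\<in>M. f (w + m))"
  using sum.reindex_bij_betw[OF bij_betw_add_residue_class, of f] by simp

lemma residue_class_subset_units: "w \<in> U \<Longrightarrow> residue_class w \<subseteq> U"
  unfolding residue_class_def using unit_add_max_ideal
  by (metis add.commute diff_add_cancel mem_Collect_eq subsetI)

lemma bij_betw_add_units: "j \<in> M \<Longrightarrow> bij_betw (\<lambda>a. a + j) U U"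
  by (rule bij_betw_byWitness[where f' = "\<lambda>a. a - j"])
     (use unit_add_max_ideal[OF _ uminus_in_max_ideal[of j]] unit_add_max_ideal in auto)

lemma bij_betw_mult_residue_class:
  assumes u0: "u0 \<in> U" and u: "u \<in> residue_class u0"
  shows "bij_betw (\<lambda>w. u * w) (residue_class 1) (residue_class u0)"
proof -
  have uU: "u \<in> U" using u residue_class_subset_units[OF u0] by blast
  have "u * w - u0 \<in> M" if "w - 1 \<in> M" for w
  proof -
    have e: "u * w - u0 = u * (w - 1) + (u - u0)" by (simp add: algebra_simps)
    show ?thesis unfolding e
      using that u by (intro add_in_max_ideal mult_in_max_ideal) (simp_all add: residue_class_def)
  qed
  moreover have "ring_inv u * v - 1 \<in> M" if "v - u0 \<in> M" for v
  proof -
    have "ring_inv u * v - 1 = ring_inv u * v - u * ring_inv u"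
      using mult_ring_inv[OF uU] by simp
    also have "\<dots> = ring_inv u * ((v - u0) - (u - u0))" by (simp add: algebra_simps)
    finally have e: "ring_inv u * v - 1 = ring_inv u * ((v - u0) - (u - u0))" .
    show ?thesis unfolding e
      using that u by (intro mult_in_max_ideal diff_in_max_ideal[of "v - u0"]) (simp_all add: residue_class_def)
  qed
  moreover have "u * (ring_inv u * v) = v" "ring_inv u * (u * w) = w" for v w
    using mult_ring_inv[OF uU] by (simp_all add: mult.assoc[symmetric] mult.commute[of "ring_inv u" u])
  ultimately show ?thesis
    by (intro bij_betw_byWitness[where f' = "\<lambda>v. ring_inv u * v"]) (auto simp: residue_class_def)
qed

lemma ring_inv_residue_class:
  assumes u0: "u0 \<in> U" and u: "u \<in> residue_class u0"
  shows "ring_inv u - ring_inv u0 \<in> M"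
proof -
  have uU: "u \<in> U" using u residue_class_subset_units[OF u0] by blast
  have "ring_inv u * ring_inv u0 * (- (u - u0))
      = ring_inv u * (u0 * ring_inv u0) - ring_inv u0 * (u * ring_inv u)"
    by (simp add: algebra_simps)
  also have "\<dots> = ring_inv u - ring_inv u0" using mult_ring_inv[OF u0] mult_ring_inv[OF uU] by simp
  finally have e: "ring_inv u - ring_inv u0 = ring_inv u * ring_inv u0 * (- (u - u0))" ..
  show ?thesis unfolding e
    using u by (intro mult_in_max_ideal uminus_in_max_ideal) (simp add: residue_class_def)
qed

lemma square_roots_add_max_ideal: "j \<in> M \<Longrightarrow> square_roots (a + j) = square_roots a"
proof -
  assume j: "j \<in> M"
  have "u * u - (a + j) \<in> M \<longleftrightarrow> u * u - a \<in> M" for u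
  proof
    assume "u * u - (a + j) \<in> M"
    from add_in_max_ideal[OF this j] show "u * u - a \<in> M" by simp
  next
    assume "u * u - a \<in> M"
    from diff_in_max_ideal[OF this j] show "u * u - (a + j) \<in> M" by (simp add: algebra_simps)
  qed
  then show ?thesis unfolding square_roots_def by simp
qed

end

definition twist :: "'a::comm_ring_1 \<Rightarrow> 'a \<Rightarrow> 'a \<Rightarrow> 'a" where
  "twist a w x = x - a * ring_inv w * ring_inv x"

lemma twist_diff:
  assumes u: "u \<in> units_of_ring" and v: "v \<in> units_of_ring"
  shows "twist a w u - twist a w v = (u - v) * (1 + a * ring_inv w * ring_inv u * ring_inv v)"
proof -
  have "(u - v) * (1 + a * ring_inv w * ring_inv u * ring_inv v) =
     u - v + a * ring_inv w * ring_inv v * (u * ring_inv u) - a * ring_inv w * ring_inv u * (v * ring_inv v)"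
    by (simp add: algebra_simps)
  also have "\<dots> = twist a w u - twist a w v"
    using mult_ring_inv[OF u] mult_ring_inv[OF v] unfolding twist_def by (simp add: algebra_simps)
  finally show ?thesis by simp
qed

lemma twist_phase:
  assumes u: "u \<in> units_of_ring" and w: "w \<in> units_of_ring"
  shows "(u + a * ring_inv u) - (u * w + a * ring_inv (u * w)) = (1 - w) * twist a w (u::'a::comm_ring_1)"
proof -
  have "(1 - w) * twist a w u = u - u * w - a * ring_inv w * ring_inv u + a * ring_inv u * (w * ring_inv w)"
    unfolding twist_def by (simp add: algebra_simps)
  also have "\<dots> = (u + a * ring_inv u) - (u * w + a * (ring_inv u * ring_inv w))"
    using mult_ring_inv[OF w] by (simp add: algebra_simps)
  finally show ?thesis using ring_inv_mult[OF u w] by simp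
qed

locale odd_local_ring = finite_local_ring +
  assumes odd_residue_char: "odd (residue_char TYPE('a::{comm_ring_1,finite}))"
begin

lemma two_unit: "(2::'a) \<in> U"
  using two_in_units[OF odd_residue_char] .

lemma square_roots_eq_Un:
  assumes u0: "u0 \<in> U" and r: "u0 * u0 - a \<in> M"
  shows "square_roots a = residue_class u0 \<union> residue_class (- u0)"
proof (intro equalityI subsetI)
  fix u assume "u \<in> square_roots a"
  then have "(u * u - a) - (u0 * u0 - a) \<in> M"
    using diff_in_max_ideal r unfolding square_roots_def by blast
  moreover have "(u * u - a) - (u0 * u0 - a) = (u - u0) * (u - - u0)" by (simp add: algebra_simps)
  ultimately show "u \<in> residue_class u0 \<union> residue_class (- u0)"
    unfolding residue_class_def using mult_in_max_ideal_iff by auto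
next
  fix u assume u: "u \<in> residue_class u0 \<union> residue_class (- u0)"
  then have "u \<in> U" using residue_class_subset_units u0 uminus_in_units by blast
  moreover have "(u - u0) * (u - - u0) \<in> M"
    using u unfolding residue_class_def by (auto simp: mult_in_max_ideal_iff)
  then have "(u - u0) * (u - - u0) + (u0 * u0 - a) \<in> M" using add_in_max_ideal r by blast
  then have "u * u - a \<in> M" by (simp add: algebra_simps)
  ultimately show "u \<in> square_roots a" unfolding square_roots_def by simp
qed

lemma residue_class_disjoint_uminus:
  assumes u0: "u0 \<in> U"
  shows "residue_class u0 \<inter> residue_class (- u0) = {}"
proof (rule ccontr)
  assume "residue_class u0 \<inter> residue_class (- u0) \<noteq> {}"
  then obtain u where "u - u0 \<in> M" "u - - u0 \<in> M" unfolding residue_class_def by blast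
  then have "(u - - u0) - (u - u0) \<in> M" using diff_in_max_ideal by blast
  then have "2 * u0 \<in> M" by (simp add: algebra_simps)
  then show False using two_unit u0 by (simp add: mem_max_ideal_iff mult_in_units_iff)
qed

lemma card_square_roots: "card (square_roots (a::'a)) = (if square_roots a = {} then 0 else 2 * card M)"
proof (cases "square_roots a = {}")
  case False
  then obtain u0 where "u0 \<in> square_roots a" by blast
  then have u0: "u0 \<in> U" and r: "u0 * u0 - a \<in> M" unfolding square_roots_def by auto
  have "card (square_roots a) = card (residue_class u0) + card (residue_class (- u0))"
    unfolding square_roots_eq_Un[OF u0 r]
    by (rule card_Un_disjoint) (use residue_class_disjoint_uminus[OF u0] in auto)
  then show ?thesis using False card_residue_class by simp
qed simp

text \<open>Counting pairs (a, u) of units with u^2 \<equiv> a (mod M) in two ways.\<close>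
lemma card_units_with_square_root: "2 * card {a \<in> U. square_roots a \<noteq> {}} = card U"
proof -
  have fibre: "{a \<in> U. u * u - a \<in> M} = residue_class (u * u)" if u: "u \<in> U" for u
    using residue_class_subset_units[OF mult_in_units_iff[THEN iffD2, OF conjI[OF u u]]]
    by (auto simp: residue_class_def) (metis minus_diff_eq uminus_in_max_ideal)+
  have "(2 * card M) * card {a \<in> U. square_roots a \<noteq> {}} = (\<Sum>a\<in>U. card (square_roots a))"
    by (simp add: card_square_roots sum.If_cases Int_def conj_commute)
  also have "\<dots> = (\<Sum>a\<in>U. \<Sum>u\<in>U. if u * u - a \<in> M then 1 else 0)"
    unfolding square_roots_def by (simp add: sum.If_cases Int_def)
  also have "\<dots> = (\<Sum>u\<in>U. \<Sum>a\<in>U. if u * u - a \<in> M then 1 else 0)" by (rule sum.swap)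
  also have "\<dots> = (\<Sum>u\<in>U. card M)"
    by (rule sum.cong) (simp_all add: sum.If_cases Int_def fibre card_residue_class)
  moreover have "M \<noteq> {}" using zero_in_max_ideal by blast
  ultimately show ?thesis by simp
qed

text \<open>Modulo M this element is 1 + a/u0^2 \<equiv> 2.\<close>
lemma twist_slope_in_units:
  assumes u0: "u0 \<in> U" and r: "u0 * u0 - a \<in> M" and w: "w \<in> residue_class 1"
    and u: "u \<in> residue_class u0" and v: "v \<in> residue_class u0"
  shows "1 + a * ring_inv w * ring_inv u * ring_inv v \<in> U"
proof -
  have uU: "u \<in> U" and vU: "v \<in> U" using u v residue_class_subset_units[OF u0] by blast+
  define x where "x = a * ring_inv w * ring_inv u * ring_inv v - 1"
  have "u * v * x = a * ring_inv w * (u * ring_inv u) * (v * ring_inv v) - u * v"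
    unfolding x_def by (simp add: algebra_simps)
  also have "\<dots> = a * (ring_inv w - ring_inv 1) - (u0 * u0 - a) - u0 * (v - u0) - v * (u - u0)"
    using mult_ring_inv[OF uU] mult_ring_inv[OF vU] by (simp add: algebra_simps)
  finally have "u * v * x \<in> M"
    using ring_inv_residue_class[OF one_in_units w] r u v
    by (simp add: diff_in_max_ideal mult_in_max_ideal residue_class_def)
  then have "x \<in> M" using uU vU by (simp add: mem_max_ideal_iff mult_in_units_iff)
  then have "2 + x \<in> U" using unit_add_max_ideal[OF two_unit] by blast
  then show ?thesis unfolding x_def by simp
qed

lemma twist_root_in_max_ideal:
  assumes u0: "u0 \<in> U" and r: "u0 * u0 - a \<in> M" and w: "w \<in> residue_class 1"
  shows "twist a w u0 \<in> M"
proof -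
  have "u0 * twist a w u0 = u0 * u0 - a * ring_inv w * (u0 * ring_inv u0)"
    unfolding twist_def by (simp add: algebra_simps)
  also have "\<dots> = (u0 * u0 - a) - a * (ring_inv w - ring_inv 1)"
    using mult_ring_inv[OF u0] by (simp add: algebra_simps)
  finally have "u0 * twist a w u0 \<in> M"
    using r ring_inv_residue_class[OF one_in_units w] by (simp add: diff_in_max_ideal mult_in_max_ideal)
  then show ?thesis using u0 by (simp add: mem_max_ideal_iff mult_in_units_iff)
qed

text \<open>The difference quotient of the twist on the residue class of u0 is a unit.\<close>
lemma bij_betw_twist:
  assumes u0: "u0 \<in> U" and r: "u0 * u0 - a \<in> M" and w: "w \<in> residue_class 1"
  shows "bij_betw (twist a w) (residue_class u0) (residue_class (twist a w u0))"
proof -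
  have inj: "inj_on (twist a w) (residue_class u0)"
  proof (rule inj_onI)
    fix u v assume u: "u \<in> residue_class u0" and v: "v \<in> residue_class u0"
      and eq: "twist a w u = twist a w v"
    have "(1 + a * ring_inv w * ring_inv u * ring_inv v) * (u - v) = 0"
      using twist_diff[of u v a w] eq u v residue_class_subset_units[OF u0]
      by (auto simp: mult.commute)
    then show "u = v"
      using unit_mult_eq_0_iff[OF twist_slope_in_units[OF u0 r w u v]] by simp
  qed
  have "twist a w ` residue_class u0 \<subseteq> residue_class (twist a w u0)"
  proof
    fix y assume "y \<in> twist a w ` residue_class u0"
    then obtain u where u: "u \<in> residue_class u0" and y: "y = twist a w u" by blast
    have "twist a w u - twist a w u0 = (1 + a * ring_inv w * ring_inv u * ring_inv u0) * (u - u0)"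
      using twist_diff[of u u0 a w] u residue_class_subset_units[OF u0] u0 by (auto simp: mult.commute)
    then show "y \<in> residue_class (twist a w u0)"
      using u y by (simp add: mult_in_max_ideal residue_class_def)
  qed
  moreover have "card (twist a w ` residue_class u0) = card (residue_class (twist a w u0))"
    using card_image[OF inj] card_residue_class by simp
  ultimately show ?thesis
    using inj unfolding bij_betw_def by (simp add: card_subset_eq)
qed

end

section \<open>The socle of a finite local Frobenius ring\<close>

locale frobenius_local_ring = finite_local_ring +
  fixes \<psi> :: "'a::{comm_ring_1,finite} \<Rightarrow> complex"
  assumes primitive: "primitive_additive_character \<psi>"
    and not_field: "\<not> is_field_ring TYPE('a)"
begin

abbreviation S where "S \<equiv> annihilator M"

lemma additive: "additive_character \<psi>"
  using primitive_additive_character_additive[OF primitive] .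

lemma card_max_ideal_mult_card_socle: "card M * card S = CARD('a)"
  using card_ideal_mult_card_annihilator[OF primitive is_ideal_max_ideal] .

lemma socle_mult: "s \<in> S \<Longrightarrow> m \<in> M \<Longrightarrow> s * m = 0"
  unfolding annihilator_def by blast

lemma socle_subset_max_ideal: "S \<subseteq> M"
proof
  fix s assume s: "s \<in> S"
  obtain x where x: "x \<in> M" "x \<noteq> 0"
    using not_field local_ring unfolding is_field_ring_def local_ring_def by (auto simp: mem_max_ideal_iff)
  then have "s \<notin> U" using socle_mult[OF s x(1)] unit_mult_eq_0_iff by blast
  then show "s \<in> M" by (simp add: mem_max_ideal_iff)
qed

lemma socle_mult_socle: "s \<in> S \<Longrightarrow> t \<in> S \<Longrightarrow> s * t = 0"
  using socle_mult socle_subset_max_ideal by blast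

lemma socle_nonzero: "\<exists>s\<in>S. s \<noteq> 0"
proof (rule ccontr)
  assume "\<not> ?thesis"
  then have "S \<subseteq> {0}" by blast
  then have "card S \<le> 1" using card_mono[of "{0}" S] by simp
  then show False
    using card_max_ideal_mult_card_socle card_max_ideal_less
    by (metis mult.right_neutral mult_le_mono2 not_le)
qed

lemma annihilator_socle: "annihilator S = M"
proof (intro equalityI subsetI)
  fix c assume c: "c \<in> annihilator S"
  obtain s where "s \<in> S" "s \<noteq> 0" using socle_nonzero by blast
  then have "c \<notin> U" using c unit_mult_eq_0_iff unfolding annihilator_def by blast
  then show "c \<in> M" by (simp add: mem_max_ideal_iff)
qed (auto simp: annihilator_def mult.commute)

lemma principal_ideal_socle:
  assumes y: "y \<in> S" "y \<noteq> 0"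
  shows "principal_ideal y = S"
proof -
  have "annihilator (principal_ideal y) = M"
  proof (intro equalityI subsetI)
    fix c assume "c \<in> annihilator (principal_ideal y)"
    then have "c * y = 0" using mem_principal_ideal_self unfolding annihilator_def by blast
    then show "c \<in> M" using y(2) unit_mult_eq_0_iff by (auto simp: mem_max_ideal_iff)
  next
    fix c assume "c \<in> M"
    then show "c \<in> annihilator (principal_ideal y)"
      using socle_mult[OF y(1)] unfolding annihilator_def principal_ideal_def
      by (auto simp: mult.left_commute mult.commute[of c])
  qed
  then have "card (principal_ideal y) * card M = card M * card S"
    using card_ideal_mult_card_annihilator[OF primitive is_ideal_principal_ideal, of y]
      card_max_ideal_mult_card_socle by simp
  moreover have "M \<noteq> {}" using zero_in_max_ideal by blast
  ultimately have "card (principal_ideal y) = card S" by simp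
  then show ?thesis
    using principal_ideal_subset[OF is_ideal_annihilator y(1)] by (simp add: card_subset_eq)
qed

text \<open>A non-zero element y of I generating a principal ideal of least size lies in the socle:
  otherwise some ym \<noteq> 0 with m \<in> M would generate a strictly smaller principal ideal.\<close>
lemma ideal_meets_socle:
  assumes I: "is_ideal I" and nz: "I \<noteq> {0}"
  shows "\<exists>y\<in>I. y \<in> S \<and> y \<noteq> 0"
proof -
  have "\<exists>y. y \<in> I \<and> y \<noteq> 0" using I nz unfolding is_ideal_def by blast
  then obtain y where y: "y \<in> I" "y \<noteq> 0"
    and least: "\<And>z. z \<in> I \<and> z \<noteq> 0 \<Longrightarrow> card (principal_ideal y) \<le> card (principal_ideal z)"
    using ex_has_least_nat[of "\<lambda>y. y \<in> I \<and> y \<noteq> 0" _ "\<lambda>y. card (principal_ideal y)"] by blast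
  have "y \<in> S"
  proof (rule ccontr)
    assume "y \<notin> S"
    then obtain m where m: "m \<in> M" "y * m \<noteq> 0" unfolding annihilator_def by (auto simp: mult.commute)
    have "y \<notin> principal_ideal (y * m)"
    proof
      assume "y \<in> principal_ideal (y * m)"
      then obtain r where "y = r * (y * m)" unfolding principal_ideal_def by blast
      then have "(1 - r * m) * y = 0" by (simp add: algebra_simps)
      moreover have "1 - r * m \<in> U"
        using unit_add_max_ideal[OF one_in_units uminus_in_max_ideal[OF mult_in_max_ideal[OF m(1)]]]
        by simp
      ultimately show False using unit_mult_eq_0_iff y(2) by blast
    qed
    then have "principal_ideal (y * m) \<subset> principal_ideal y"
      using principal_ideal_subset[OF is_ideal_principal_ideal, of "y * m" y] mem_principal_ideal_self[of y]
      unfolding principal_ideal_def by (auto simp: mult.commute)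
    then have "card (principal_ideal (y * m)) < card (principal_ideal y)" by (simp add: psubset_card_mono)
    moreover have "y * m \<in> I" using I y(1) unfolding is_ideal_def by (metis mult.commute)
    ultimately show False using least m(2) by fastforce
  qed
  then show ?thesis using y by blast
qed

lemma socle_subset_ideal: "is_ideal I \<Longrightarrow> I \<noteq> {0} \<Longrightarrow> S \<subseteq> I"
  using ideal_meets_socle principal_ideal_socle principal_ideal_subset by metis

lemma sum_character_socle: "(\<Sum>j\<in>S. \<psi> (d * j)) = (if d \<in> M then of_nat (card S) else 0)"
  using sum_primitive_character_ideal[OF primitive is_ideal_annihilator] annihilator_socle by simp

lemma sum_character_max_ideal: "(\<Sum>m\<in>M. \<psi> (c * m)) = (if c \<in> S then of_nat (card M) else 0)"
  using sum_primitive_character_ideal[OF primitive is_ideal_max_ideal] by simp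

lemma card_socle_coset: "card {w \<in> residue_class 1. 1 - w \<in> S} = card S"
proof -
  have "{w \<in> residue_class 1. 1 - w \<in> S} = (\<lambda>s. 1 - s) ` S"
  proof (intro equalityI subsetI)
    fix w assume "w \<in> {w \<in> residue_class 1. 1 - w \<in> S}"
    then show "w \<in> (\<lambda>s. 1 - s) ` S" by (auto intro: rev_image_eqI[of "1 - w"])
  next
    fix w assume "w \<in> (\<lambda>s. 1 - s) ` S"
    then obtain s where s: "s \<in> S" "w = 1 - s" by blast
    then have "w - 1 \<in> M" using socle_subset_max_ideal uminus_in_max_ideal by auto
    then show "w \<in> {w \<in> residue_class 1. 1 - w \<in> S}" using s by (simp add: residue_class_def)
  qed
  also have "card \<dots> = card S" by (rule card_image) (simp add: inj_on_def)
  finally show ?thesis .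
qed

end

section \<open>Kloosterman sums over a finite local Frobenius ring\<close>

definition partial_kloosterman ::
  "('a::comm_ring_1 \<Rightarrow> complex) \<Rightarrow> ('a \<Rightarrow> complex) \<Rightarrow> 'a \<Rightarrow> 'a \<Rightarrow> complex" where
  "partial_kloosterman \<psi> \<tau> a w = (\<Sum>u\<in>residue_class w. \<tau> u * \<psi> (u + a * ring_inv u))"

lemma cmod_power4_two_terms:
  fixes \<alpha> \<beta> P Q :: complex
  assumes "\<alpha> * \<beta> = 1" "cnj \<alpha> = \<beta>"
  defines "X \<equiv> P * cnj P + Q * cnj Q" and "Y \<equiv> P * cnj Q" and "Y' \<equiv> Q * cnj P"
  shows "complex_of_real (cmod (\<alpha> * P + \<beta> * Q) ^ 4)
    = X\<^sup>2 + 2 * (Y * Y') + \<alpha> ^ 4 * Y\<^sup>2 + \<beta> ^ 4 * Y'\<^sup>2 + 2 * X * (\<alpha>\<^sup>2 * Y) + 2 * X * (\<beta>\<^sup>2 * Y')"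
proof -
  have "complex_of_real (cmod (\<alpha> * P + \<beta> * Q) ^ 4)
      = (complex_of_real (cmod (\<alpha> * P + \<beta> * Q)) ^ 2) ^ 2"
    by (simp flip: power_mult)
  also have "complex_of_real (cmod (\<alpha> * P + \<beta> * Q)) ^ 2 = (\<alpha> * P + \<beta> * Q) * cnj (\<alpha> * P + \<beta> * Q)"
    using complex_norm_square by simp
  also have "(\<alpha> * P + \<beta> * Q) * cnj (\<alpha> * P + \<beta> * Q) = (\<alpha> * \<beta>) * X + \<alpha>\<^sup>2 * Y + \<beta>\<^sup>2 * Y'"
    using assms(2) complex_cnj_cnj[of \<alpha>] unfolding X_def Y_def Y'_def
    by (simp add: algebra_simps power2_eq_square)
  also have "(\<alpha> * \<beta> * X + \<alpha>\<^sup>2 * Y + \<beta>\<^sup>2 * Y')\<^sup>2 = X\<^sup>2 + 2 * ((\<alpha> * \<beta>)\<^sup>2 * (Y * Y'))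
      + (\<alpha>\<^sup>2)\<^sup>2 * Y\<^sup>2 + (\<beta>\<^sup>2)\<^sup>2 * Y'\<^sup>2 + 2 * X * (\<alpha>\<^sup>2 * Y) + 2 * X * (\<beta>\<^sup>2 * Y')"
    using assms(1) by (simp add: algebra_simps power2_eq_square)
  finally show ?thesis using assms(1) by (simp flip: power_mult)
qed

locale kloosterman_setting = frobenius_local_ring \<psi> + odd_local_ring
  for \<psi> :: "'a::{comm_ring_1,finite} \<Rightarrow> complex" +
  fixes \<tau> :: "'a \<Rightarrow> complex"
  assumes mult_char: "mult_character \<tau>"
    and not_primitive: "\<not> primitive_mult_character \<tau>"
begin

abbreviation K where "K \<equiv> kloosterman \<psi> \<tau>"

text \<open>Every non-zero ideal contains the socle, so a conductor other than (0) contains S.\<close>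
lemma mult_character_one_plus_socle:
  assumes s: "s \<in> S"
  shows "\<tau> (1 + s) = 1"
proof (cases "trivial_mult_character \<tau>")
  case True
  have "1 + s \<in> U" using unit_add_max_ideal[OF one_in_units] s socle_subset_max_ideal by blast
  then show ?thesis using True unfolding trivial_mult_character_def by blast
next
  case False
  show ?thesis
  proof (rule ccontr)
    assume ne: "\<tau> (1 + s) \<noteq> 1"
    have small: "J \<subseteq> {0}" if "is_ideal J" "\<forall>x\<in>J. \<tau> (1 + x) = 1" for J
    proof (rule ccontr)
      assume "\<not> J \<subseteq> {0}"
      then have "J \<noteq> {0}" by blast
      then have "S \<subseteq> J" using socle_subset_ideal[OF that(1)] by simp
      then show False using that(2) s ne by blast
    qed
    let ?Q = "\<lambda>I. is_ideal I \<and> I \<subseteq> M \<and> (\<forall>x\<in>I. \<tau> (1 + x) = 1) \<and>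
        (\<forall>J. is_ideal J \<and> J \<subseteq> M \<and> (\<forall>x\<in>J. \<tau> (1 + x) = 1) \<longrightarrow> J \<subseteq> I)"
    have zero: "is_ideal {0::'a}" unfolding is_ideal_def by simp
    have "(THE I. ?Q I) = {0}"
    proof (rule the_equality)
      show "?Q {0}" using zero small mult_character_1[OF mult_char] by auto
    next
      fix I assume Q: "?Q I"
      then have "I \<subseteq> {0}" using small by simp
      moreover have "0 \<in> I" using Q unfolding is_ideal_def by simp
      ultimately show "I = {0}" by blast
    qed
    then show False
      using False not_primitive unfolding primitive_mult_character_def conductor_def by simp
  qed
qed

lemma ring_inv_one_plus_socle: "t \<in> S \<Longrightarrow> ring_inv (1 + t) = 1 - t"
  using socle_mult_socle[of t t] by (intro ring_inv_unique) (simp add: algebra_simps)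

text \<open>Substituting u \<mapsto> u(1 + t) with t in the socle leaves \<tau>(u) unchanged and multiplies
  the phase by \<psi>((u - a/u) t).\<close>
lemma kloosterman_socle_twist:
  assumes t: "t \<in> S"
  shows "K a = (\<Sum>u\<in>U. \<tau> u * \<psi> (u + a * ring_inv u) * \<psi> ((u - a * ring_inv u) * t))"
proof -
  have t1: "1 + t \<in> U" using unit_add_max_ideal[OF one_in_units] t socle_subset_max_ideal by blast
  have "K a = (\<Sum>u\<in>U. \<tau> (u * (1 + t)) * \<psi> (u * (1 + t) + a * ring_inv (u * (1 + t))))"
    unfolding kloosterman_def
    using sum.reindex_bij_betw[OF bij_betw_mult_unit[OF t1], of "\<lambda>u. \<tau> u * \<psi> (u + a * ring_inv u)"]
    by simp
  also have "\<dots> = (\<Sum>u\<in>U. \<tau> u * \<psi> (u + a * ring_inv u) * \<psi> ((u - a * ring_inv u) * t))"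
  proof (rule sum.cong[OF refl])
    fix u assume u: "u \<in> U"
    have "ring_inv (u * (1 + t)) = ring_inv u * (1 - t)"
      using ring_inv_mult[OF u t1] ring_inv_one_plus_socle[OF t] by simp
    moreover have "u * (1 + t) + a * (ring_inv u * (1 - t)) = (u + a * ring_inv u) + (u - a * ring_inv u) * t"
      by (simp add: algebra_simps)
    ultimately have "u * (1 + t) + a * ring_inv (u * (1 + t)) = (u + a * ring_inv u) + (u - a * ring_inv u) * t"
      by simp
    then show "\<tau> (u * (1 + t)) * \<psi> (u * (1 + t) + a * ring_inv (u * (1 + t))) =
        \<tau> u * \<psi> (u + a * ring_inv u) * \<psi> ((u - a * ring_inv u) * t)"
      using mult_character_mult[OF mult_char u t1] mult_character_one_plus_socle[OF t]
      by (simp add: additive_character_add[OF additive])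
  qed
  finally show ?thesis .
qed

text \<open>Averaging over the socle kills every u with u - a/u \<notin> M, that is, u^2 \<not>\<equiv> a (mod M).\<close>
lemma kloosterman_eq_sum_square_roots:
  "K a = (\<Sum>u\<in>square_roots a. \<tau> u * \<psi> (u + a * ring_inv u))"
proof -
  define g where "g u = \<tau> u * \<psi> (u + a * ring_inv u)" for u
  define c where "c u = u - a * ring_inv u" for u
  have c_iff: "c u \<in> M \<longleftrightarrow> u * u - a \<in> M" if u: "u \<in> U" for u
  proof -
    have "u * c u = u * u - a" unfolding c_def using mult_ring_inv[OF u] by (simp add: algebra_simps)
    then show ?thesis using u by (metis mem_max_ideal_iff mult_in_units_iff)
  qed
  have "of_nat (card S) * K a = (\<Sum>t\<in>S. K a)" by simp
  also have "\<dots> = (\<Sum>t\<in>S. \<Sum>u\<in>U. g u * \<psi> (c u * t))"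
    unfolding g_def c_def by (intro sum.cong refl kloosterman_socle_twist)
  also have "\<dots> = (\<Sum>u\<in>U. g u * (\<Sum>t\<in>S. \<psi> (c u * t)))"
    by (subst sum.swap) (simp add: sum_distrib_left)
  also have "\<dots> = (\<Sum>u\<in>U. g u * (if c u \<in> M then of_nat (card S) else 0))"
    by (simp only: sum_character_socle)
  also have "\<dots> = of_nat (card S) * (\<Sum>u\<in>{u \<in> U. c u \<in> M}. g u)"
    by (simp add: sum.inter_filter[symmetric] sum_distrib_left if_distrib mult.commute cong: if_cong)
  also have "{u \<in> U. c u \<in> M} = square_roots a"
    unfolding square_roots_def using c_iff by blast
  finally show ?thesis
    using socle_nonzero unfolding g_def by (auto simp: card_eq_0_iff)
qed

lemma partial_kloosterman_socle_shift:
  assumes w: "w \<in> U" and j: "j \<in> S"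
  shows "(\<Sum>u\<in>residue_class w. \<tau> u * \<psi> (u + (a + j) * ring_inv u))
    = \<psi> (j * ring_inv w) * partial_kloosterman \<psi> \<tau> a w"
  unfolding partial_kloosterman_def sum_distrib_left
proof (rule sum.cong[OF refl])
  fix u assume u: "u \<in> residue_class w"
  have "j * (ring_inv u - ring_inv w) = 0"
    using socle_mult[OF j ring_inv_residue_class[OF w u]] .
  then have "u + (a + j) * ring_inv u = (u + a * ring_inv u) + j * ring_inv w"
    by (simp add: algebra_simps)
  then show "\<tau> u * \<psi> (u + (a + j) * ring_inv u) = \<psi> (j * ring_inv w) * (\<tau> u * \<psi> (u + a * ring_inv u))"
    by (simp add: additive_character_add[OF additive])
qed

lemma kloosterman_socle_shift:
  assumes u0: "u0 \<in> U" and r: "u0 * u0 - a \<in> M" and j: "j \<in> S"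
  shows "K (a + j) = \<psi> (j * ring_inv u0) * partial_kloosterman \<psi> \<tau> a u0
    + \<psi> (- (j * ring_inv u0)) * partial_kloosterman \<psi> \<tau> a (- u0)"
proof -
  have "K (a + j) = (\<Sum>u\<in>square_roots a. \<tau> u * \<psi> (u + (a + j) * ring_inv u))"
    using kloosterman_eq_sum_square_roots[of "a + j"] square_roots_add_max_ideal j socle_subset_max_ideal
    by auto
  also have "\<dots> = (\<Sum>u\<in>residue_class u0. \<tau> u * \<psi> (u + (a + j) * ring_inv u))
      + (\<Sum>u\<in>residue_class (- u0). \<tau> u * \<psi> (u + (a + j) * ring_inv u))"
    unfolding square_roots_eq_Un[OF u0 r]
    by (rule sum.union_disjoint) (use residue_class_disjoint_uminus[OF u0] in auto)
  finally show ?thesis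
    using partial_kloosterman_socle_shift[OF u0 j] partial_kloosterman_socle_shift[OF uminus_in_units[OF u0] j]
    by (simp add: ring_inv_uminus[OF u0])
qed

lemma kloosterman_summand_mult_cnj:
  assumes u: "u \<in> U" and w: "w \<in> U"
  shows "\<tau> u * \<psi> (u + a * ring_inv u) * cnj (\<tau> (u * w) * \<psi> (u * w + a * ring_inv (u * w)))
    = cnj (\<tau> w) * \<psi> ((1 - w) * twist a w u)"
proof -
  have "\<tau> u * cnj (\<tau> (u * w)) = cnj (\<tau> w)"
    using mult_character_mult[OF mult_char u w] mult_character_mult_cnj[OF mult_char u]
    by (simp add: mult.assoc[symmetric])
  moreover have "\<psi> (u + a * ring_inv u) * cnj (\<psi> (u * w + a * ring_inv (u * w))) = \<psi> ((1 - w) * twist a w u)"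
    unfolding cnj_additive_character[OF additive] twist_phase[OF u w, symmetric]
    using additive_character_add[OF additive, of "u + a * ring_inv u" "- (u * w + a * ring_inv (u * w))"]
    by (simp only: diff_conv_add_uminus)
  ultimately show ?thesis by (simp add: ac_simps)
qed

lemma partial_kloosterman_mult_cnj_expand:
  assumes u0: "u0 \<in> U"
  shows "partial_kloosterman \<psi> \<tau> a u0 * cnj (partial_kloosterman \<psi> \<tau> a u0)
    = (\<Sum>w\<in>residue_class 1. cnj (\<tau> w) * (\<Sum>u\<in>residue_class u0. \<psi> ((1 - w) * twist a w u)))"
proof -
  define f where "f u = \<tau> u * \<psi> (u + a * ring_inv u)" for u
  have "partial_kloosterman \<psi> \<tau> a u0 * cnj (partial_kloosterman \<psi> \<tau> a u0)
      = (\<Sum>u\<in>residue_class u0. \<Sum>v\<in>residue_class u0. f u * cnj (f v))"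
    unfolding partial_kloosterman_def f_def[symmetric] by (simp add: sum_product cnj_sum)
  also have "\<dots> = (\<Sum>u\<in>residue_class u0. \<Sum>w\<in>residue_class 1. f u * cnj (f (u * w)))"
  proof (rule sum.cong[OF refl])
    fix u assume "u \<in> residue_class u0"
    from sum.reindex_bij_betw[OF bij_betw_mult_residue_class[OF u0 this], of "\<lambda>v. f u * cnj (f v)"]
    show "(\<Sum>v\<in>residue_class u0. f u * cnj (f v)) = (\<Sum>w\<in>residue_class 1. f u * cnj (f (u * w)))"
      by simp
  qed
  also have "\<dots> = (\<Sum>u\<in>residue_class u0. \<Sum>w\<in>residue_class 1. cnj (\<tau> w) * \<psi> ((1 - w) * twist a w u))"
    using residue_class_subset_units[OF u0] residue_class_subset_units[OF one_in_units]
    unfolding f_def by (intro sum.cong refl kloosterman_summand_mult_cnj) auto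
  also have "\<dots> = (\<Sum>w\<in>residue_class 1. cnj (\<tau> w) * (\<Sum>u\<in>residue_class u0. \<psi> ((1 - w) * twist a w u)))"
    by (subst sum.swap) (simp add: sum_distrib_left)
  finally show ?thesis .
qed

text \<open>The twist maps the residue class of u0 onto a residue class inside M; summing \<psi>((1 - w)y)
  over it vanishes unless 1 - w is in the socle, where both \<tau>(w) and the phase are trivial.\<close>
lemma sum_twist_character:
  assumes u0: "u0 \<in> U" and r: "u0 * u0 - a \<in> M" and w: "w \<in> residue_class 1"
  shows "cnj (\<tau> w) * (\<Sum>u\<in>residue_class u0. \<psi> ((1 - w) * twist a w u))
    = (if 1 - w \<in> S then of_nat (card M) else 0)"
proof -
  define t0 where "t0 = twist a w u0"
  have "(\<Sum>u\<in>residue_class u0. \<psi> ((1 - w) * twist a w u)) = (\<Sum>y\<in>residue_class t0. \<psi> ((1 - w) * y))"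
    using sum.reindex_bij_betw[OF bij_betw_twist[OF u0 r w]] unfolding t0_def by simp
  also have "\<dots> = \<psi> ((1 - w) * t0) * (\<Sum>m\<in>M. \<psi> ((1 - w) * m))"
    by (simp add: sum_residue_class distrib_left additive_character_add[OF additive] sum_distrib_left)
  finally have sum_eq: "(\<Sum>u\<in>residue_class u0. \<psi> ((1 - w) * twist a w u))
      = \<psi> ((1 - w) * t0) * (if 1 - w \<in> S then of_nat (card M) else 0)"
    by (simp add: sum_character_max_ideal)
  show ?thesis
  proof (cases "1 - w \<in> S")
    case True
    have "w - 1 \<in> S" using ideal_uminus[OF is_ideal_annihilator True] by simp
    then have "\<tau> w = 1" using mult_character_one_plus_socle[of "w - 1"] by simp
    moreover have "(1 - w) * t0 = 0"
      using socle_mult[OF True twist_root_in_max_ideal[OF u0 r w]] unfolding t0_def .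
    ultimately show ?thesis using sum_eq True additive_character_0[OF additive] by simp
  qed (simp add: sum_eq)
qed

lemma norm_partial_kloosterman:
  assumes u0: "u0 \<in> U" and r: "u0 * u0 - a \<in> M"
  shows "partial_kloosterman \<psi> \<tau> a u0 * cnj (partial_kloosterman \<psi> \<tau> a u0) = of_nat CARD('a)"
proof -
  have "partial_kloosterman \<psi> \<tau> a u0 * cnj (partial_kloosterman \<psi> \<tau> a u0)
      = (\<Sum>w\<in>residue_class 1. if 1 - w \<in> S then of_nat (card M) else 0)"
    unfolding partial_kloosterman_mult_cnj_expand[OF u0]
    by (intro sum.cong refl sum_twist_character[OF u0 r])
  also have "\<dots> = of_nat (card M * card {w \<in> residue_class 1. 1 - w \<in> S})"
    by (simp add: sum.If_cases Int_def conj_commute)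
  finally show ?thesis by (simp add: card_socle_coset card_max_ideal_mult_card_socle)
qed

lemma sum_character_socle_unit: "d \<in> U \<Longrightarrow> (\<Sum>j\<in>S. \<psi> (d * j)) = 0"
  by (simp add: sum_character_socle mem_max_ideal_iff)

text \<open>Expanding |\<alpha>P + \<beta>Q|^4 with \<alpha> = \<psi>(j/u0), \<beta> = \<psi>(-j/u0), only the terms free of \<alpha>, \<beta> survive
  summation over j in the socle, since \<plusminus>2/u0 and \<plusminus>4/u0 are units.\<close>
lemma sum_socle_kloosterman_power4:
  assumes u0: "u0 \<in> U" and r: "u0 * u0 - a \<in> M"
  shows "(\<Sum>j\<in>S. complex_of_real (cmod (K (a + j)) ^ 4)) = of_nat (card S) * (6 * of_nat CARD('a) ^ 2)"
proof -
  define c where "c = ring_inv u0"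
  define P where "P = partial_kloosterman \<psi> \<tau> a u0"
  define Q where "Q = partial_kloosterman \<psi> \<tau> a (- u0)"
  define X where "X = P * cnj P + Q * cnj Q"
  define Y where "Y = P * cnj Q"
  define Y' where "Y' = Q * cnj P"
  have YY': "Y * Y' = (P * cnj P) * (Q * cnj Q)" unfolding Y_def Y'_def by (simp add: ac_simps)
  have PP: "P * cnj P = of_nat CARD('a)" unfolding P_def using norm_partial_kloosterman[OF u0 r] .
  have QQ: "Q * cnj Q = of_nat CARD('a)"
    unfolding Q_def using norm_partial_kloosterman[OF uminus_in_units[OF u0]] r by simp
  have powers: "\<psi> (e * (j * c)) ^ n = \<psi> ((of_nat n * e * c) * j)" for e j n
    by (simp add: additive_character_of_nat_mult[OF additive, symmetric] ac_simps)
  have expand: "complex_of_real (cmod (K (a + j)) ^ 4) = X\<^sup>2 + 2 * (Y * Y')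
      + \<psi> ((4 * c) * j) * Y\<^sup>2 + \<psi> ((- 4 * c) * j) * Y'\<^sup>2
      + 2 * X * Y * \<psi> ((2 * c) * j) + 2 * X * Y' * \<psi> ((- 2 * c) * j)" if j: "j \<in> S" for j
  proof -
    have "K (a + j) = \<psi> (j * c) * P + \<psi> (- (j * c)) * Q"
      unfolding P_def Q_def c_def using kloosterman_socle_shift[OF u0 r j] .
    moreover have "\<psi> (j * c) * \<psi> (- (j * c)) = 1"
      using additive_character_add[OF additive, of "j * c" "- (j * c)"] additive_character_0[OF additive]
      by simp
    ultimately show ?thesis
      using cmod_power4_two_terms[of "\<psi> (j * c)" "\<psi> (- (j * c))" P Q]
        powers[of 1 j 4] powers[of "- 1" j 4] powers[of 1 j 2] powers[of "- 1" j 2]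
      unfolding X_def Y_def Y'_def by (simp add: cnj_additive_character[OF additive] ac_simps)
  qed
  have "2 * c \<in> U" "4 * c \<in> U"
    using two_unit mult_in_units_iff[of 2 2] ring_inv_in_units[OF u0] unfolding c_def
    by (auto simp: mult_in_units_iff)
  then have vanish: "(\<Sum>j\<in>S. \<psi> (2 * c * j)) = 0" "(\<Sum>j\<in>S. \<psi> (- (2 * c * j))) = 0"
      "(\<Sum>j\<in>S. \<psi> (4 * c * j)) = 0" "(\<Sum>j\<in>S. \<psi> (- (4 * c * j))) = 0"
    using sum_character_socle_unit[of "2 * c"] sum_character_socle_unit[of "- (2 * c)"]
      sum_character_socle_unit[of "4 * c"] sum_character_socle_unit[of "- (4 * c)"]
    by (simp_all add: uminus_in_units)
  have "(\<Sum>j\<in>S. complex_of_real (cmod (K (a + j)) ^ 4)) = (\<Sum>j\<in>S. X\<^sup>2 + 2 * (Y * Y')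
      + \<psi> ((4 * c) * j) * Y\<^sup>2 + \<psi> ((- 4 * c) * j) * Y'\<^sup>2
      + 2 * X * Y * \<psi> ((2 * c) * j) + 2 * X * Y' * \<psi> ((- 2 * c) * j))"
    by (rule sum.cong[OF refl expand])
  also have "\<dots> = of_nat (card S) * (X\<^sup>2 + 2 * (Y * Y'))"
    by (simp add: sum.distrib sum_distrib_left[symmetric] sum_distrib_right[symmetric] vanish)
  also have "X\<^sup>2 + 2 * (Y * Y') = 6 * of_nat CARD('a) ^ 2"
    using PP QQ YY' unfolding X_def by (simp add: power2_eq_square)
  finally show ?thesis .
qed

lemma sum_socle_shifts_power4:
  assumes a: "a \<in> U"
  shows "(\<Sum>j\<in>S. cmod (K (a + j)) ^ 4)
    = (if square_roots a = {} then 0 else real (card S) * (6 * real CARD('a) ^ 2))"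
proof (cases "square_roots a = {}")
  case True
  then have "K (a + j) = 0" if "j \<in> S" for j
    using that kloosterman_eq_sum_square_roots square_roots_add_max_ideal socle_subset_max_ideal by auto
  then show ?thesis using True by simp
next
  case False
  then obtain u0 where "u0 \<in> U" "u0 * u0 - a \<in> M" unfolding square_roots_def by blast
  then have "complex_of_real (\<Sum>j\<in>S. cmod (K (a + j)) ^ 4)
      = complex_of_real (real (card S) * (6 * real CARD('a) ^ 2))"
    using sum_socle_kloosterman_power4 by simp
  then show ?thesis using False by (simp only: of_real_eq_iff if_False)
qed

text \<open>The fourth moment is invariant under a \<mapsto> a + j for j in the socle, so it equals the
  socle average, which is nonzero exactly for the |R^\<times>|/2 units that are squares mod M.\<close>
theorem sum_kloosterman_power4:
  "(\<Sum>a\<in>U. cmod (K a) ^ 4) = 3 * real (card U) * real CARD('a) ^ 2"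
proof -
  define N where "N = card {a \<in> U. square_roots a \<noteq> {}}"
  have "real (card S) * (\<Sum>a\<in>U. cmod (K a) ^ 4) = (\<Sum>j\<in>S. \<Sum>a\<in>U. cmod (K a) ^ 4)" by simp
  also have "\<dots> = (\<Sum>j\<in>S. \<Sum>a\<in>U. cmod (K (a + j)) ^ 4)"
  proof (rule sum.cong[OF refl])
    fix j assume "j \<in> S"
    then have "j \<in> M" using socle_subset_max_ideal by blast
    from sum.reindex_bij_betw[OF bij_betw_add_units[OF this], of "\<lambda>a. cmod (K a) ^ 4"]
    show "(\<Sum>a\<in>U. cmod (K a) ^ 4) = (\<Sum>a\<in>U. cmod (K (a + j)) ^ 4)" by simp
  qed
  also have "\<dots> = (\<Sum>a\<in>U. \<Sum>j\<in>S. cmod (K (a + j)) ^ 4)" by (rule sum.swap)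
  also have "\<dots> = real (card S) * (real N * (6 * real CARD('a) ^ 2))"
    by (simp add: sum_socle_shifts_power4 sum.If_cases N_def Int_def conj_commute)
  finally have "(\<Sum>a\<in>U. cmod (K a) ^ 4) = real N * (6 * real CARD('a) ^ 2)"
    using socle_nonzero by (auto simp: card_eq_0_iff)
  also have "\<dots> = 3 * real (2 * N) * real CARD('a) ^ 2" by simp
  finally show ?thesis unfolding N_def card_units_with_square_root .
qed

end

theorem mainTheorem12:
  fixes \<psi> \<tau> :: "'a::{comm_ring_1,finite} \<Rightarrow> complex"
  assumes "local_ring TYPE('a)"
    and "\<not> is_field_ring TYPE('a)"
    and "odd (residue_char TYPE('a))"
    and "primitive_additive_character \<psi>"
    and "mult_character \<tau>"
    and "\<not> primitive_mult_character \<tau>"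
  shows "(\<Sum>a\<in>(units_of_ring::'a set). (cmod (kloosterman \<psi> \<tau> a)) ^ 4)
           = 3 * real (card (units_of_ring::'a set)) * real (CARD('a)) ^ 2"
proof -
  interpret kloosterman_setting \<psi> \<tau>
    using assms by unfold_locales
  show ?thesis by (rule sum_kloosterman_power4)
qed

end
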